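(* Let $\bar d\ge1$, fix an index $*\in\{1,\dots,\bar d\}$, and for $\mathbf{c},\mathbf{r}\in[0,1]^{\bar d}$ define $h^C_{\mathbf{c},\mathbf{r}},h^S_{\mathbf{c},\mathbf{r}}:[0,1]^{\bar d}\to[0,1]$ by $h^C_{\mathbf{c},\mathbf{r}}(\mathbf{p})=1$ and $h^S_{\mathbf{c},\mathbf{r}}(\mathbf{p})=p_*$ if $c_i\le p_i<c_i+r_i$ for all $i$, and $h^C_{\mathbf{c},\mathbf{r}}(\mathbf{p})=h^S_{\mathbf{c},\mathbf{r}}(\mathbf{p})=0$ otherwise. Let $\mathcal{H}^C=\{h^C_{\mathbf{c},\mathbf{r}}\}$ and $\mathcal{H}^S=\{h^S_{\mathbf{c},\mathbf{r}}\}$ over all $\mathbf{c},\mathbf{r}$. Then $\operatorname{vc}(\mathcal{H}^S)\le 2\bar d$ and $\operatorname{vc}(\mathcal{H}^C)\le 2\bar d$.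
   Context: A countable set $I\subseteq[0,1]^{\bar d}$ is pseudo-shattered by a function class $\mathcal{H}$ if there is a function $g:I\to\mathbb{R}$ such that for every $J\subseteq I$ there is $h_J\in\mathcal{H}$ with $h_J(\mathbf{x})\le g(\mathbf{x})$ for $\mathbf{x}\in J$ and $h_J(\mathbf{x})>g(\mathbf{x})$ for $\mathbf{x}\in I\setminus J$. The pseudo-dimension $\operatorname{vc}(\mathcal{H})$ is the supremum of $|I|$ over sets $I$ pseudo-shattered by $\mathcal{H}$. *)

theory Defs
  imports "HOL-Analysis.Analysis" "HOL-Library.Extended_Nat"
begin

text \<open>Points of [0,1]^d are vectors of type real^'n with d = CARD('n).\<close>

definition unit_cube :: "(real ^ 'n::finite) set" where
  "unit_cube = {p. \<forall>i. 0 \<le> p $ i \<and> p $ i \<le> 1}"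

definition in_box :: "real ^ 'n::finite \<Rightarrow> real ^ 'n \<Rightarrow> real ^ 'n \<Rightarrow> bool" where
  "in_box c r p = (\<forall>i. c $ i \<le> p $ i \<and> p $ i < c $ i + r $ i)"

definition hC :: "real ^ 'n::finite \<Rightarrow> real ^ 'n \<Rightarrow> real ^ 'n \<Rightarrow> real" where
  "hC c r p = (if in_box c r p then 1 else 0)"

definition hS :: "'n::finite \<Rightarrow> real ^ 'n \<Rightarrow> real ^ 'n \<Rightarrow> real ^ 'n \<Rightarrow> real" where
  "hS s c r p = (if in_box c r p then p $ s else 0)"

definition HC :: "(real ^ 'n::finite \<Rightarrow> real) set" where
  "HC = {hC c r | c r. c \<in> unit_cube \<and> r \<in> unit_cube}"

definition HS :: "'n::finite \<Rightarrow> (real ^ 'n \<Rightarrow> real) set" where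
  "HS s = {hS s c r | c r. c \<in> unit_cube \<and> r \<in> unit_cube}"

definition pseudo_shattered :: "('a \<Rightarrow> real) set \<Rightarrow> 'a set \<Rightarrow> bool" where
  "pseudo_shattered H I \<longleftrightarrow> (\<exists>g :: 'a \<Rightarrow> real. \<forall>J \<subseteq> I. \<exists>h \<in> H.
      (\<forall>x \<in> J. h x \<le> g x) \<and> (\<forall>x \<in> I - J. h x > g x))"

definition pseudo_dim :: "'a set \<Rightarrow> ('a \<Rightarrow> real) set \<Rightarrow> enat" where
  "pseudo_dim X H = Sup {(if finite I then enat (card I) else \<infinity>) | I.
      countable I \<and> I \<subseteq> X \<and> pseudo_shattered H I}"

end

theory Submission
  imports Defs
begin

text \<open>Every function in either class is a fixed nonnegative function v masked by a half-open
  box. If such a class pseudo-shatters I, then for each x \<in> I there is a box containing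
  I - {x} but not x. On the other hand, for each coordinate a point of I minimising and a
  point maximising that coordinate span a coordinate interval containing all of I, so a box
  containing these at most 2d extreme points contains all of I. Hence I has at most 2d
  points.\<close>

lemma pseudo_shattered_subset:
  assumes "pseudo_shattered H I" and "F \<subseteq> I"
  shows "pseudo_shattered H F"
proof -
  obtain g where g: "\<And>J. J \<subseteq> I \<Longrightarrow> \<exists>h\<in>H. (\<forall>x\<in>J. h x \<le> g x) \<and> (\<forall>x\<in>I - J. h x > g x)"
    using assms(1) unfolding pseudo_shattered_def by blast
  have "\<exists>h\<in>H. (\<forall>x\<in>J. h x \<le> g x) \<and> (\<forall>x\<in>F - J. h x > g x)" if "J \<subseteq> F" for J
    using g[of J] that assms(2) by blast
  then show ?thesis
    unfolding pseudo_shattered_def by blast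
qed

lemma pseudo_dim_le_if_finite_shattered_le:
  assumes "\<And>I. I \<subseteq> X \<Longrightarrow> finite I \<Longrightarrow> pseudo_shattered H I \<Longrightarrow> card I \<le> n"
  shows "pseudo_dim X H \<le> enat n"
  unfolding pseudo_dim_def
proof (rule Sup_least, clarify)
  fix I assume IX: "I \<subseteq> X" and sh: "pseudo_shattered H I"
  show "(if finite I then enat (card I) else \<infinity>) \<le> enat n"
  proof (cases "finite I")
    case True
    then show ?thesis
      using assms[OF IX True sh] by simp
  next
    case False
    then obtain F where F: "F \<subseteq> I" "finite F" "card F = Suc n"
      using infinite_arbitrarily_large by blast
    then have "card F \<le> n"
      using assms[of F] IX pseudo_shattered_subset[OF sh] by blast
    with F(3) show ?thesis
      by simp
  qed
qed

text \<open>Shattering J = I forces g \<ge> 0 on I, J = {} forces v > g on I, and J = {x} then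
  yields a function that exceeds g \<ge> 0 on I - {x}, so is unmasked there, but does not
  exceed g x < v x at x, so masks x.\<close>

lemma pseudo_shattered_masked_separates:
  assumes masked: "\<And>h. h \<in> H \<Longrightarrow> \<exists>B\<in>\<B>. \<forall>y\<in>I. h y = (if y \<in> B then v y else 0)"
    and v_nonneg: "\<And>y. y \<in> I \<Longrightarrow> v y \<ge> 0"
    and sh: "pseudo_shattered H I" and x: "x \<in> I"
  shows "\<exists>B\<in>\<B>. I - {x} \<subseteq> B \<and> x \<notin> B"
proof -
  obtain g where g: "\<And>J. J \<subseteq> I \<Longrightarrow> \<exists>h\<in>H. (\<forall>y\<in>J. h y \<le> g y) \<and> (\<forall>y\<in>I - J. h y > g y)"
    using sh unfolding pseudo_shattered_def by blast
  have h_nonneg: "h y \<ge> 0" if "h \<in> H" "y \<in> I" for h y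
    using masked[OF that(1)] v_nonneg[OF that(2)] that(2) by force
  have g_nonneg: "g y \<ge> 0" if "y \<in> I" for y
  proof -
    obtain h where "h \<in> H" "\<forall>y\<in>I. h y \<le> g y"
      using g[of I] by auto
    then show ?thesis
      using h_nonneg that by force
  qed
  have v_gt_g: "v x > g x"
  proof -
    obtain h where h: "h \<in> H" "h x > g x"
      using g[of "{}"] x by auto
    obtain B where "\<forall>y\<in>I. h y = (if y \<in> B then v y else 0)"
      using masked[OF h(1)] by blast
    then show ?thesis
      using h(2) g_nonneg[OF x] x by (auto split: if_splits)
  qed
  obtain h where h: "h \<in> H" "h x \<le> g x" "\<forall>y\<in>I - {x}. h y > g y"
    using g[of "{x}"] x by auto
  obtain B where B: "B \<in> \<B>" "\<forall>y\<in>I. h y = (if y \<in> B then v y else 0)"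
    using masked[OF h(1)] by blast
  have "I - {x} \<subseteq> B"
    using B(2) h(3) g_nonneg by force
  moreover have "x \<notin> B"
    using B(2) h(2) v_gt_g x by auto
  ultimately show ?thesis
    using B(1) by blast
qed

lemma in_box_extreme_points:
  fixes F :: "(real ^ 'n::finite) set"
  assumes fin: "finite F"
  obtains E where "E \<subseteq> F" "card E \<le> 2 * CARD('n)"
    "\<And>c r. \<forall>y\<in>E. in_box c r y \<Longrightarrow> \<forall>y\<in>F. in_box c r y"
proof (cases "F = {}")
  case True
  then show ?thesis
    using that[of "{}"] by simp
next
  case False
  define lo where "lo i = arg_min_on (\<lambda>y. y $ i) F" for i
  define hi where "hi i = arg_min_on (\<lambda>y. - y $ i) F" for i
  have lo_hi_in: "lo i \<in> F" "hi i \<in> F" for i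
    unfolding lo_def hi_def using fin False by (rule arg_min_if_finite(1))+
  have lo_le: "lo i $ i \<le> y $ i" and le_hi: "y $ i \<le> hi i $ i" if "y \<in> F" for i y
    using arg_min_least[OF fin False that, of "\<lambda>y. y $ i"]
      arg_min_least[OF fin False that, of "\<lambda>y. - y $ i"]
    unfolding lo_def hi_def by simp_all
  let ?E = "range lo \<union> range hi"
  have "?E \<subseteq> F"
    using lo_hi_in by blast
  moreover have "card ?E \<le> 2 * CARD('n)"
    using card_Un_le[of "range lo" "range hi"] card_image_le[of UNIV lo]
      card_image_le[of UNIV hi] by simp
  moreover have "\<forall>y\<in>F. in_box c r y" if "\<forall>y\<in>?E. in_box c r y" for c r
  proof
    fix y assume y: "y \<in> F"
    have "in_box c r (lo i)" "in_box c r (hi i)" for i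
      using that by auto
    then show "in_box c r y"
      using lo_le[OF y] le_hi[OF y] unfolding in_box_def by (meson order_trans le_less_trans)
  qed
  ultimately show ?thesis
    using that by blast
qed

lemma card_le_if_pseudo_shattered_masked_boxes:
  fixes I :: "(real ^ 'n::finite) set"
  assumes masked: "\<And>h. h \<in> H \<Longrightarrow> \<exists>c r. \<forall>y\<in>I. h y = (if in_box c r y then v y else 0)"
    and v_nonneg: "\<And>y. y \<in> I \<Longrightarrow> v y \<ge> 0"
    and sh: "pseudo_shattered H I" and fin: "finite I"
  shows "card I \<le> 2 * CARD('n)"
proof (rule ccontr)
  assume "\<not> ?thesis"
  obtain E where E: "E \<subseteq> I" "card E \<le> 2 * CARD('n)"
    and E_box: "\<And>c r. \<forall>y\<in>E. in_box c r y \<Longrightarrow> \<forall>y\<in>I. in_box c r y"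
    using in_box_extreme_points[OF fin] by blast
  with \<open>\<not> ?thesis\<close> obtain x where x: "x \<in> I" "x \<notin> E"
    by (metis subsetI subset_antisym)
  have masked_sets: "\<exists>B\<in>{Collect (in_box c r) | c r. True}.
      \<forall>y\<in>I. h y = (if y \<in> B then v y else 0)" if h: "h \<in> H" for h
  proof -
    obtain c r where "\<forall>y\<in>I. h y = (if in_box c r y then v y else 0)"
      using masked[OF h] by blast
    then show ?thesis
      by (intro bexI[of _ "Collect (in_box c r)"]) auto
  qed
  obtain c r where "\<forall>y\<in>I - {x}. in_box c r y" "\<not> in_box c r x"
    using pseudo_shattered_masked_separates[OF masked_sets v_nonneg sh x(1)] by auto
  moreover from this(1) have "\<forall>y\<in>E. in_box c r y"
    using E(1) x(2) by blast
  ultimately show False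
    using E_box x(1) by blast
qed

lemma pseudo_dim_masked_boxes_le:
  fixes X :: "(real ^ 'n::finite) set"
  assumes masked: "\<And>h. h \<in> H \<Longrightarrow> \<exists>c r. \<forall>y\<in>X. h y = (if in_box c r y then v y else 0)"
    and v_nonneg: "\<And>y. y \<in> X \<Longrightarrow> v y \<ge> 0"
  shows "pseudo_dim X H \<le> enat (2 * CARD('n))"
proof (rule pseudo_dim_le_if_finite_shattered_le)
  fix I assume I: "I \<subseteq> X" "finite I" "pseudo_shattered H I"
  have "\<exists>c r. \<forall>y\<in>I. h y = (if in_box c r y then v y else 0)" if "h \<in> H" for h
    using masked[OF that] I(1) by blast
  with I v_nonneg show "card I \<le> 2 * CARD('n)"
    by (intro card_le_if_pseudo_shattered_masked_boxes[where v = v]) auto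
qed

theorem lemmaA12:
  fixes s :: "'n::finite"
  shows "pseudo_dim unit_cube (HS s) \<le> enat (2 * CARD('n))
       \<and> pseudo_dim (unit_cube :: (real ^ 'n) set) HC \<le> enat (2 * CARD('n))"
proof
  show "pseudo_dim unit_cube (HS s) \<le> enat (2 * CARD('n))"
    by (rule pseudo_dim_masked_boxes_le[where v = "\<lambda>y. y $ s"])
      (fastforce simp: HS_def hS_def unit_cube_def)+
  show "pseudo_dim (unit_cube :: (real ^ 'n) set) HC \<le> enat (2 * CARD('n))"
    by (rule pseudo_dim_masked_boxes_le[where v = "\<lambda>_. 1"]) (fastforce simp: HC_def hC_def)+
qed

end
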